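(* Let $\mathcal{M}_{\mathcal{T}}$ be a staged tree model. Let $H$ be the $(|I|+|F|)\times|J|$ matrix with rows indexed by $I\sqcup F$ and entries $h_{ij}=\mu_{ij}$ for $i\in I$ and $h_{fj}=-\sum_{s_\ell\in f}\mu_{\ell j}$ for $f\in F$. Define $\lambda\in\{-1,+1\}^{|J|}$ by $\lambda_j=(-1)^{\sum_f h_{fj}}$. Then the pair $(\tilde H,\tilde\lambda)$ obtained from $(H,\lambda)$ by summing collinear rows and deleting zero rows is the Horn pair of $\mathcal{M}_{\mathcal{T}}$, i.e. it is a Horn pair whose Horn map equals the MLE of $\mathcal{M}_{\mathcal{T}}$ and has image $\mathcal{M}_{\mathcal{T}}$.
   Context: Staged tree: a directed rooted tree $\mathcal{T}$, every non-leaf vertex with at least two outgoing edges, with edge labels from $\{s_i:i\in I\}$ such that any two florets (multisets of labels on the outgoing edges of a vertex) are equal or disjoint; $F$ is the set of florets, $J$ the set of root-to-leaf paths ($|J|=n+1$), $\mu_{ij}$ the number of occurrences of $s_i$ on path $j$. The model $\mathcal{M}_{\mathcal{T}}\subseteq\Delta_n$ is the image of $\{(s_i)\in(0,1)^{|I|}:\sum_{s_i\in f}s_i=1\ \forall f\}$ under $p_j=\prod_i s_i^{\mu_{ij}}$. For an integer matrix $H=(h_{ij})$ with columns $h_j$ summing to zero and a vector $\lambda$, write $(Hu)^{h_j}=\prod_i(\sum_k h_{ik}u_k)^{h_{ij}}$ and consider the rational map $u\mapsto(\lambda_j(Hu)^{h_j})_j$. $(H,\lambda)$ is friendly if all $\lambda_j\ne0$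 and $\sum_j\lambda_j(Hu)^{h_j}=1$ identically. A friendly pair is a Horn pair if no row of $H$ is zero or a multiple of another row and the map is defined on and sends positive vectors to positive vectors; its restriction to $\mathbb{R}^{|J|}_{>0}$ is the Horn map. The reduction $(\tilde H,\tilde\lambda)$: replace each class of collinear rows of $H$ by their sum, delete zero rows, and take $\tilde\lambda$ the coefficient vector so that $(\tilde H,\tilde\lambda)$ defines the same rational map as $(H,\lambda)$. *)

theory Defs
  imports "HOL-Analysis.Analysis"
begin

text \<open>A matrix H has rows indexed by a finite set R and columns by a finite set J,
  entries h r j (integers). Vectors u are functions on the column index type; only
  their values on J matter.\<close>

definition hlin :: "('r \<Rightarrow> 'c \<Rightarrow> int) \<Rightarrow> 'c set \<Rightarrow> ('c \<Rightarrow> real) \<Rightarrow> 'r \<Rightarrow> real" where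
  "hlin h J u i = (\<Sum>k\<in>J. real_of_int (h i k) * u k)"

definition hmono :: "('r \<Rightarrow> 'c \<Rightarrow> int) \<Rightarrow> 'r set \<Rightarrow> 'c set \<Rightarrow> ('c \<Rightarrow> real) \<Rightarrow> 'c \<Rightarrow> real" where
  "hmono h R J u j = (\<Prod>i\<in>R. (hlin h J u i) powi (h i j))"

definition hdefined :: "('r \<Rightarrow> 'c \<Rightarrow> int) \<Rightarrow> 'r set \<Rightarrow> 'c set \<Rightarrow> ('c \<Rightarrow> real) \<Rightarrow> bool" where
  "hdefined h R J u \<longleftrightarrow> (\<forall>j\<in>J. \<forall>i\<in>R. h i j < 0 \<longrightarrow> hlin h J u i \<noteq> 0)"

definition hmap :: "('r \<Rightarrow> 'c \<Rightarrow> int) \<Rightarrow> 'r set \<Rightarrow> 'c set \<Rightarrow> ('c \<Rightarrow> real) \<Rightarrow> ('c \<Rightarrow> real) \<Rightarrow> 'c \<Rightarrow> real" where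
  "hmap h R J lam u = (\<lambda>j. if j \<in> J then lam j * hmono h R J u j else 0)"

definition friendly :: "('r \<Rightarrow> 'c \<Rightarrow> int) \<Rightarrow> 'r set \<Rightarrow> 'c set \<Rightarrow> ('c \<Rightarrow> real) \<Rightarrow> bool" where
  "friendly h R J lam \<longleftrightarrow> finite R \<and> finite J \<and>
     (\<forall>j\<in>J. (\<Sum>i\<in>R. h i j) = 0) \<and>
     (\<forall>j\<in>J. lam j \<noteq> 0) \<and>
     (\<forall>u. hdefined h R J u \<longrightarrow> (\<Sum>j\<in>J. lam j * hmono h R J u j) = 1)"

definition zero_row :: "('r \<Rightarrow> 'c \<Rightarrow> int) \<Rightarrow> 'c set \<Rightarrow> 'r \<Rightarrow> bool" where
  "zero_row h J i \<longleftrightarrow> (\<forall>k\<in>J. h i k = 0)"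

definition row_multiple :: "('r \<Rightarrow> 'c \<Rightarrow> int) \<Rightarrow> 'c set \<Rightarrow> 'r \<Rightarrow> 'r \<Rightarrow> bool" where
  "row_multiple h J i i' \<longleftrightarrow> (\<exists>c::real. \<forall>k\<in>J. real_of_int (h i k) = c * real_of_int (h i' k))"

definition horn_pair :: "('r \<Rightarrow> 'c \<Rightarrow> int) \<Rightarrow> 'r set \<Rightarrow> 'c set \<Rightarrow> ('c \<Rightarrow> real) \<Rightarrow> bool" where
  "horn_pair h R J lam \<longleftrightarrow> friendly h R J lam \<and>
     (\<forall>i\<in>R. \<not> zero_row h J i) \<and>
     (\<forall>i\<in>R. \<forall>i'\<in>R. i \<noteq> i' \<longrightarrow> \<not> row_multiple h J i i') \<and>
     (\<forall>u. (\<forall>j\<in>J. 0 < u j) \<longrightarrow> hdefined h R J u \<and> (\<forall>j\<in>J. 0 < hmap h R J lam u j))"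

definition nz_rows :: "('r \<Rightarrow> 'c \<Rightarrow> int) \<Rightarrow> 'r set \<Rightarrow> 'c set \<Rightarrow> 'r set" where
  "nz_rows h R J = {i\<in>R. \<not> zero_row h J i}"

definition collinear_rel :: "('r \<Rightarrow> 'c \<Rightarrow> int) \<Rightarrow> 'r set \<Rightarrow> 'c set \<Rightarrow> ('r \<times> 'r) set" where
  "collinear_rel h R J = {(i, i'). i \<in> nz_rows h R J \<and> i' \<in> nz_rows h R J \<and> row_multiple h J i' i}"

definition red_h :: "('r \<Rightarrow> 'c \<Rightarrow> int) \<Rightarrow> 'r set \<Rightarrow> 'c \<Rightarrow> int" where
  "red_h h C k = (\<Sum>i\<in>C. h i k)"

definition red_rows :: "('r \<Rightarrow> 'c \<Rightarrow> int) \<Rightarrow> 'r set \<Rightarrow> 'c set \<Rightarrow> 'r set set" where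
  "red_rows h R J = {C \<in> nz_rows h R J // collinear_rel h R J. \<not> zero_row (red_h h) J C}"

definition red_lam :: "('r \<Rightarrow> 'c \<Rightarrow> int) \<Rightarrow> 'r set \<Rightarrow> 'c set \<Rightarrow> ('c \<Rightarrow> real) \<Rightarrow> 'c \<Rightarrow> real" where
  "red_lam h R J lam = (THE lam'. (\<forall>j. j \<notin> J \<longrightarrow> lam' j = 0) \<and>
      (\<forall>u. hdefined h R J u \<and> hdefined (red_h h) (red_rows h R J) J u \<longrightarrow>
          hmap (red_h h) (red_rows h R J) J lam' u = hmap h R J lam u))"

datatype 'l ltree = Node "('l \<times> 'l ltree) list"

inductive vertex :: "'l ltree \<Rightarrow> 'l ltree \<Rightarrow> bool" where
  root: "vertex t t"
| child: "(l, t') \<in> set cs \<Longrightarrow> vertex t' v \<Longrightarrow> vertex (Node cs) v"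

inductive is_path :: "'l ltree \<Rightarrow> 'l list \<Rightarrow> bool" where
  leaf: "is_path (Node []) []"
| step: "(l, t) \<in> set cs \<Longrightarrow> is_path t p \<Longrightarrow> is_path (Node cs) (l # p)"

definition paths :: "'l ltree \<Rightarrow> 'l list set" where
  "paths T = {p. is_path T p}"

definition florets :: "'l ltree \<Rightarrow> 'l set set" where
  "florets T = {set (map fst cs) | cs. vertex T (Node cs) \<and> cs \<noteq> []}"

definition labels :: "'l ltree \<Rightarrow> 'l set" where
  "labels T = \<Union> (florets T)"

definition staged_tree :: "'l ltree \<Rightarrow> bool" where
  "staged_tree T \<longleftrightarrow>
     (\<forall>cs. vertex T (Node cs) \<longrightarrow> cs = [] \<or> 2 \<le> length cs) \<and>
     (\<forall>cs. vertex T (Node cs) \<longrightarrow> distinct (map fst cs)) \<and>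
     (\<forall>f\<in>florets T. \<forall>g\<in>florets T. f = g \<or> f \<inter> g = {})"

definition mu :: "'l \<Rightarrow> 'l list \<Rightarrow> nat" where
  "mu i j = count_list j i"

definition staged_model :: "'l ltree \<Rightarrow> ('l list \<Rightarrow> real) set" where
  "staged_model T = {p. \<exists>s :: 'l \<Rightarrow> real.
      (\<forall>i\<in>labels T. 0 < s i \<and> s i < 1) \<and>
      (\<forall>f\<in>florets T. (\<Sum>i\<in>f. s i) = 1) \<and>
      p = (\<lambda>j. if j \<in> paths T then (\<Prod>i\<in>labels T. s i ^ mu i j) else 0)}"

definition loglik :: "'c set \<Rightarrow> ('c \<Rightarrow> real) \<Rightarrow> ('c \<Rightarrow> real) \<Rightarrow> real" where
  "loglik J u p = (\<Sum>j\<in>J. u j * ln (p j))"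

definition is_MLE :: "'c set \<Rightarrow> ('c \<Rightarrow> real) set \<Rightarrow> ('c \<Rightarrow> real) \<Rightarrow> ('c \<Rightarrow> real) \<Rightarrow> bool" where
  "is_MLE J M u p \<longleftrightarrow> p \<in> M \<and> (\<forall>q\<in>M. q \<noteq> p \<longrightarrow> loglik J u q < loglik J u p)"

definition stH :: "'l ltree \<Rightarrow> ('l + 'l set) \<Rightarrow> 'l list \<Rightarrow> int" where
  "stH T r j = (case r of Inl i \<Rightarrow> int (mu i j)
                        | Inr f \<Rightarrow> - (\<Sum>l\<in>f. int (mu l j)))"

definition stR :: "'l ltree \<Rightarrow> ('l + 'l set) set" where
  "stR T = Inl ` labels T \<union> Inr ` florets T"

definition stLam :: "'l ltree \<Rightarrow> 'l list \<Rightarrow> real" where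
  "stLam T j = (-1::real) powi (\<Sum>f\<in>florets T. stH T (Inr f) j)"

end

theory Submission
  imports Defs
begin

(* Write u_i = sum_j mu_ij u_j for a label s_i and u_f = sum_{s_i in f} u_i for a floret f;
   up to sign these are the linear forms of H.  The sign lambda_j cancels the signs of the
   floret forms, so lambda_j (Hu)^{h_j} = prod_i (u_i / u_{f(i)})^{mu_ij}: the rational map of
   (H, lambda) sends u to the model point with parameters s_i = u_i / u_{f(i)}.  The
   log-likelihood of a model point splits into one sum per floret, and Gibbs' inequality on each
   floret shows that this point is the unique maximiser.  Gibbs' inequality over the paths shows
   that every model point is its own estimate, which gives the image.  Summing a class of
   collinear rows only multiplies each coordinate of the map by a nonzero constant, so the
   reduced pair defines the same map wherever the original one is defined. *)

lemma power_int_sum: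
  fixes x :: "'a::field"
  assumes "x \<noteq> 0 \<or> (\<forall>a\<in>A. 0 \<le> n a)"
  shows "x powi (\<Sum>a\<in>A. n a) = (\<Prod>a\<in>A. x powi n a)"
  using assms
proof (induction A rule: infinite_finite_induct)
  case (insert a A)
  have "x powi (n a + sum n A) = x powi n a * x powi sum n A"
  proof (cases "x \<noteq> 0 \<or> n a + sum n A \<noteq> 0")
    case True
    then show ?thesis by (rule power_int_add)
  next
    case False
    with insert.prems have "n a = 0" "sum n A = 0"
      by (auto simp: add_nonneg_eq_0_iff sum_nonneg)
    then show ?thesis by simp
  qed
  with insert show ?case by simp
qed simp_all

lemma prod_power_int_mult_const:
  fixes x :: "'a::field"
  assumes "x \<noteq> 0 \<or> (\<forall>i\<in>C. 0 \<le> n i)"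
  shows "(\<Prod>i\<in>C. (a i * x) powi n i) = (\<Prod>i\<in>C. a i powi n i) * x powi (\<Sum>i\<in>C. n i)"
  by (simp add: power_int_mult_distrib prod.distrib power_int_sum[OF assms])

lemma eventually_not_in_finite:
  fixes B :: "'a::t1_space set"
  assumes "finite B"
  shows "eventually (\<lambda>t. t \<notin> B) (at x)"
  using assms islimpt_finite islimpt_iff_eventually by blast

lemma hlin_row_multiple:
  assumes "\<forall>k\<in>J. real_of_int (h i k) = c * real_of_int (h r k)"
  shows "hlin h J u i = c * hlin h J u r"
  using assms by (simp add: hlin_def sum_distrib_left mult.assoc)

lemma hlin_red_h: "hlin (red_h h) J u C = (\<Sum>i\<in>C. hlin h J u i)"
  unfolding hlin_def red_h_def by (simp add: sum_distrib_right sum.swap[of _ J])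

lemma hlin_add_const: "hlin h J (\<lambda>k. u k + t) i = hlin h J u i + t * hlin h J (\<lambda>_. 1) i"
  unfolding hlin_def by (simp add: algebra_simps sum.distrib sum_distrib_left)

lemma sum_hmap: "(\<Sum>j\<in>J. hmap h R J lam u j) = (\<Sum>j\<in>J. lam j * hmono h R J u j)"
  by (simp add: hmap_def)

lemma hmono_tendsto_add_const:
  assumes "hdefined h R J u" and "j \<in> J"
  shows "((\<lambda>t. hmono h R J (\<lambda>k. u k + t) j) \<longlongrightarrow> hmono h R J u j) (at 0)"
  unfolding hmono_def hlin_add_const
proof (intro tendsto_prod)
  fix i assume "i \<in> R"
  then have "hlin h J u i \<noteq> 0 \<or> 0 \<le> h i j"
    using assms by (force simp: hdefined_def)
  moreover have "((\<lambda>t. hlin h J u i + t * hlin h J (\<lambda>_. 1) i) \<longlongrightarrow> hlin h J u i) (at 0)"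
    by (auto intro!: tendsto_eq_intros)
  ultimately show "((\<lambda>t. (hlin h J u i + t * hlin h J (\<lambda>_. 1) i) powi h i j)
      \<longlongrightarrow> hlin h J u i powi h i j) (at 0)"
    by (intro tendsto_power_int') auto
qed

section \<open>Collinear rows and the reduced pair\<close>

lemma row_multiple_refl: "row_multiple h J i i"
  unfolding row_multiple_def by (rule exI[of _ 1]) simp

lemma row_multiple_sym:
  assumes "row_multiple h J i i'" and "\<not> zero_row h J i"
  shows "row_multiple h J i' i"
proof -
  obtain c where c: "\<forall>k\<in>J. real_of_int (h i k) = c * real_of_int (h i' k)"
    using assms(1) by (auto simp: row_multiple_def)
  obtain k where "k \<in> J" "h i k \<noteq> 0"
    using assms(2) by (auto simp: zero_row_def)
  with c have "c \<noteq> 0" by force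
  with c have "\<forall>k\<in>J. real_of_int (h i' k) = (1 / c) * real_of_int (h i k)"
    by auto
  then show ?thesis unfolding row_multiple_def by blast
qed

lemma row_multiple_trans:
  assumes "row_multiple h J i i'" and "row_multiple h J i' i''"
  shows "row_multiple h J i i''"
proof -
  obtain c where c: "\<forall>k\<in>J. real_of_int (h i k) = c * real_of_int (h i' k)"
    using assms(1) by (auto simp: row_multiple_def)
  obtain d where d: "\<forall>k\<in>J. real_of_int (h i' k) = d * real_of_int (h i'' k)"
    using assms(2) by (auto simp: row_multiple_def)
  from c d have "\<forall>k\<in>J. real_of_int (h i k) = (c * d) * real_of_int (h i'' k)"
    by auto
  then show ?thesis unfolding row_multiple_def by blast
qed

lemma equiv_collinear_rel: "equiv (nz_rows h R J) (collinear_rel h R J)"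
proof (rule equivI)
  show "collinear_rel h R J \<subseteq> nz_rows h R J \<times> nz_rows h R J"
    unfolding collinear_rel_def by auto
  show "refl_on (nz_rows h R J) (collinear_rel h R J)"
    unfolding refl_on_def collinear_rel_def using row_multiple_refl by auto
  show "sym (collinear_rel h R J)"
  proof (rule symI)
    fix i i' assume "(i, i') \<in> collinear_rel h R J"
    then show "(i', i) \<in> collinear_rel h R J"
      using row_multiple_sym[of h J i' i] by (auto simp: collinear_rel_def nz_rows_def)
  qed
  show "trans (collinear_rel h R J)"
  proof (rule transI)
    fix i i' i'' assume "(i, i') \<in> collinear_rel h R J" "(i', i'') \<in> collinear_rel h R J"
    then show "(i, i'') \<in> collinear_rel h R J"
      using row_multiple_trans[of h J i'' i' i] by (auto simp: collinear_rel_def)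
  qed
qed

lemma hdefined_if_nz_rows_nonzero:
  assumes "\<forall>i\<in>nz_rows h R J. hlin h J u i \<noteq> 0"
  shows "hdefined h R J u"
  unfolding hdefined_def
proof (intro ballI impI)
  fix j i assume "j \<in> J" "i \<in> R" "h i j < 0"
  then have "i \<in> nz_rows h R J" by (force simp: nz_rows_def zero_row_def)
  then show "hlin h J u i \<noteq> 0" using assms by blast
qed

locale row_reduction =
  fixes h :: "'r \<Rightarrow> 'c \<Rightarrow> int" and R :: "'r set" and J :: "'c set"
  assumes finite_R: "finite R"
begin

abbreviation "N \<equiv> nz_rows h R J"
abbreviation "Q \<equiv> N // collinear_rel h R J"
abbreviation "R' \<equiv> red_rows h R J"

lemma nz_rows_subset: "N \<subseteq> R"
  by (auto simp: nz_rows_def)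

lemma finite_nz_rows: "finite N"
  using finite_subset[OF nz_rows_subset finite_R] .

lemma finite_classes: "finite Q"
  using finite_nz_rows equiv_collinear_rel by (meson finite_quotient equiv_type)

lemma class_subset: "C \<in> Q \<Longrightarrow> C \<subseteq> N"
  using equiv_collinear_rel in_quotient_imp_subset by blast

lemma finite_class: "C \<in> Q \<Longrightarrow> finite C"
  using class_subset finite_nz_rows finite_subset by blast

lemma red_rows_subset: "R' \<subseteq> Q"
  by (auto simp: red_rows_def)

lemma finite_red_rows: "finite R'"
  using finite_classes red_rows_subset finite_subset by blast

lemma classes_disjoint: "C \<in> Q \<Longrightarrow> C' \<in> Q \<Longrightarrow> C \<noteq> C' \<Longrightarrow> C \<inter> C' = {}"
  using quotient_disj[OF equiv_collinear_rel] by blast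

lemma Union_classes: "\<Union>Q = N"
  using equiv_collinear_rel by (rule Union_quotient)

lemma prod_classes: "(\<Prod>C\<in>Q. \<Prod>i\<in>C. g i) = (\<Prod>i\<in>N. g i)"
  using prod.Union_disjoint[of Q g] finite_class classes_disjoint
  by (simp add: Union_classes pairwise_def disjnt_def)

lemma sum_classes: "(\<Sum>C\<in>Q. \<Sum>i\<in>C. g i) = (\<Sum>i\<in>N. g i)"
  using sum.Union_disjoint[of Q g] finite_class classes_disjoint
  by (simp add: Union_classes pairwise_def disjnt_def)

definition class_rep :: "'r set \<Rightarrow> 'r" where
  "class_rep C = (SOME r. r \<in> C)"

lemma class_rep_in: "C \<in> Q \<Longrightarrow> class_rep C \<in> C"
  unfolding class_rep_def
  using equiv_collinear_rel in_quotient_imp_non_empty by (metis some_in_eq)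

lemma class_rep_nz: "C \<in> Q \<Longrightarrow> \<not> zero_row h J (class_rep C)"
  using class_rep_in class_subset by (auto simp: nz_rows_def)

lemma class_eq_Image: "C \<in> Q \<Longrightarrow> i \<in> C \<Longrightarrow> C = collinear_rel h R J `` {i}"
  using equiv_collinear_rel by (metis Image_singleton_iff equiv_class_eq quotientE)

lemma row_multiple_class_rep:
  assumes "C \<in> Q" and "i \<in> C"
  shows "row_multiple h J i (class_rep C)"
  using assms class_eq_Image[OF assms(1) class_rep_in[OF assms(1)]]
  by (auto simp: collinear_rel_def)

definition class_coeff :: "'r set \<Rightarrow> 'r \<Rightarrow> real" where
  "class_coeff C i = (SOME c. \<forall>k\<in>J. real_of_int (h i k) = c * real_of_int (h (class_rep C) k))"

lemma class_coeff:
  assumes "C \<in> Q" and "i \<in> C"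
  shows "\<forall>k\<in>J. real_of_int (h i k) = class_coeff C i * real_of_int (h (class_rep C) k)"
  using row_multiple_class_rep[OF assms] unfolding row_multiple_def class_coeff_def
  by (rule someI_ex)

lemma hlin_class_coeff:
  assumes "C \<in> Q" and "i \<in> C"
  shows "hlin h J u i = class_coeff C i * hlin h J u (class_rep C)"
  using class_coeff[OF assms] by (rule hlin_row_multiple)

definition class_weight :: "'r set \<Rightarrow> real" where
  "class_weight C = (\<Sum>i\<in>C. class_coeff C i)"

lemma red_h_class_weight:
  assumes "C \<in> Q" and "k \<in> J"
  shows "real_of_int (red_h h C k) = class_weight C * real_of_int (h (class_rep C) k)"
  using class_coeff[OF assms(1)] assms(2)
  by (simp add: red_h_def class_weight_def sum_distrib_right)

lemma hlin_red_h_class_weight: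
  "C \<in> Q \<Longrightarrow> hlin (red_h h) J u C = class_weight C * hlin h J u (class_rep C)"
  by (simp add: hlin_red_h hlin_class_coeff class_weight_def sum_distrib_right)

lemma red_rows_iff:
  assumes C: "C \<in> Q"
  shows "C \<in> R' \<longleftrightarrow> class_weight C \<noteq> 0"
proof -
  obtain k where k: "k \<in> J" "h (class_rep C) k \<noteq> 0"
    using class_rep_nz[OF C] by (auto simp: zero_row_def)
  have "zero_row (red_h h) J C \<longleftrightarrow> class_weight C = 0"
    using red_h_class_weight[OF C] k by (force simp: zero_row_def)
  with C show ?thesis by (simp add: red_rows_def)
qed

lemma hlin_red_h_nonzero:
  assumes "C \<in> R'" and "i \<in> C" and "hlin h J u i \<noteq> 0"
  shows "hlin (red_h h) J u C \<noteq> 0"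
proof -
  have "C \<in> Q" using assms(1) red_rows_subset by blast
  with assms show ?thesis
    using red_rows_iff hlin_class_coeff hlin_red_h_class_weight by force
qed

lemma hdefined_red_h:
  assumes "hdefined h R J u"
  shows "hdefined (red_h h) R' J u"
  unfolding hdefined_def
proof (intro ballI impI)
  fix j C assume j: "j \<in> J" and C: "C \<in> R'" and neg: "red_h h C j < 0"
  then obtain i where i: "i \<in> C" "h i j < 0"
    unfolding red_h_def by (metis not_less sum_nonneg)
  with C have "i \<in> R" using red_rows_subset class_subset nz_rows_subset by blast
  with assms j i have "hlin h J u i \<noteq> 0" by (auto simp: hdefined_def)
  with C i(1) show "hlin (red_h h) J u C \<noteq> 0" by (rule hlin_red_h_nonzero)
qed

lemma red_rows_not_multiple:
  assumes C: "C \<in> R'" and C': "C' \<in> R'" and "C \<noteq> C'"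
  shows "\<not> row_multiple (red_h h) J C C'"
proof
  assume "row_multiple (red_h h) J C C'"
  then obtain c where c: "\<forall>k\<in>J. real_of_int (red_h h C k) = c * real_of_int (red_h h C' k)"
    by (auto simp: row_multiple_def)
  have CQ: "C \<in> Q" and CQ': "C' \<in> Q" using C C' red_rows_subset by auto
  have "class_weight C \<noteq> 0" using red_rows_iff[OF CQ] C by auto
  then have "\<forall>k\<in>J. real_of_int (h (class_rep C) k)
      = (c * class_weight C' / class_weight C) * real_of_int (h (class_rep C') k)"
    using c red_h_class_weight[OF CQ] red_h_class_weight[OF CQ'] by (simp add: field_simps)
  then have "row_multiple h J (class_rep C) (class_rep C')"
    unfolding row_multiple_def by blast
  then have "(class_rep C', class_rep C) \<in> collinear_rel h R J"
    using class_rep_in CQ CQ' class_subset unfolding collinear_rel_def by blast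
  then have "class_rep C \<in> C'"
    using class_eq_Image[OF CQ' class_rep_in[OF CQ']] by blast
  with class_rep_in[OF CQ] show False
    using quotient_disj[OF equiv_collinear_rel CQ CQ'] \<open>C \<noteq> C'\<close> by auto
qed

(* If h_i = c_i h_r on a class C with representative r and w = sum_{i in C} c_i, then
   prod_{i in C} l_i^{h_ij} = (prod_{i in C} c_i^{h_ij} / w^{sum_i h_ij}) (w l_r)^{sum_i h_ij},
   and w l_r is the linear form of the summed row. *)
definition class_factor :: "'r set \<Rightarrow> 'c \<Rightarrow> real" where
  "class_factor C j = (\<Prod>i\<in>C. class_coeff C i powi h i j) / class_weight C powi (\<Sum>i\<in>C. h i j)"

definition red_factor :: "'c \<Rightarrow> real" where
  "red_factor j = (\<Prod>C\<in>Q. class_factor C j)"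

lemma prod_class_eq_class_factor:
  assumes C: "C \<in> Q" and j: "j \<in> J"
    and defined: "\<forall>i\<in>C. h i j < 0 \<longrightarrow> hlin h J u i \<noteq> 0"
  shows "(\<Prod>i\<in>C. hlin h J u i powi h i j) = class_factor C j * hlin (red_h h) J u C powi red_h h C j"
proof -
  let ?x = "hlin h J u (class_rep C)" and ?S = "\<Sum>i\<in>C. h i j"
    and ?P = "\<Prod>i\<in>C. class_coeff C i powi h i j"
  have "?x \<noteq> 0 \<or> (\<forall>i\<in>C. 0 \<le> h i j)"
  proof (rule disjCI)
    assume "\<not> (\<forall>i\<in>C. 0 \<le> h i j)"
    then obtain i where "i \<in> C" "h i j < 0" by (auto simp: not_le)
    with defined hlin_class_coeff[OF C this(1)] show "?x \<noteq> 0" by auto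
  qed
  then have "(\<Prod>i\<in>C. (class_coeff C i * ?x) powi h i j) = ?P * ?x powi ?S"
    by (rule prod_power_int_mult_const)
  then have "(\<Prod>i\<in>C. hlin h J u i powi h i j) = ?P * ?x powi ?S"
    using hlin_class_coeff[OF C] by (metis (no_types, lifting) prod.cong)
  moreover have "red_h h C j = ?S"
    by (simp add: red_h_def)
  moreover have "?P * ?x powi ?S = class_factor C j * hlin (red_h h) J u C powi ?S"
  proof (cases "class_weight C = 0")
    case True
    then have "real_of_int (red_h h C j) = 0"
      using red_h_class_weight[OF C j] by simp
    then have "?S = 0"
      unfolding of_int_eq_0_iff red_h_def .
    then show ?thesis by (simp add: class_factor_def)
  next
    case False
    then show ?thesis
      by (simp add: class_factor_def hlin_red_h_class_weight[OF C] power_int_mult_distrib)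
  qed
  ultimately show ?thesis by simp
qed

lemma hmono_eq_red_factor:
  assumes j: "j \<in> J" and defined: "hdefined h R J u"
  shows "hmono h R J u j = red_factor j * hmono (red_h h) R' J u j"
proof -
  have "hmono h R J u j = (\<Prod>i\<in>N. hlin h J u i powi h i j)"
    unfolding hmono_def using j
    by (intro prod.mono_neutral_right[OF finite_R nz_rows_subset])
      (auto simp: nz_rows_def zero_row_def)
  also have "\<dots> = (\<Prod>C\<in>Q. \<Prod>i\<in>C. hlin h J u i powi h i j)"
    by (rule prod_classes[symmetric])
  also have "\<dots> = (\<Prod>C\<in>Q. class_factor C j * hlin (red_h h) J u C powi red_h h C j)"
    using defined j class_subset nz_rows_subset
    by (intro prod.cong refl prod_class_eq_class_factor) (auto simp: hdefined_def subset_iff)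
  also have "\<dots> = red_factor j * (\<Prod>C\<in>Q. hlin (red_h h) J u C powi red_h h C j)"
    by (simp add: red_factor_def prod.distrib)
  also have "(\<Prod>C\<in>Q. hlin (red_h h) J u C powi red_h h C j) = hmono (red_h h) R' J u j"
    unfolding hmono_def using j
    by (intro prod.mono_neutral_right[OF finite_classes red_rows_subset])
      (auto simp: red_rows_def zero_row_def)
  finally show ?thesis .
qed

lemma hmap_red_factor:
  assumes "hdefined h R J u"
  shows "hmap (red_h h) R' J (\<lambda>j. if j \<in> J then lam j * red_factor j else 0) u = hmap h R J lam u"
  using hmono_eq_red_factor[OF _ assms] by (simp add: hmap_def fun_eq_iff)

lemma hmono_red_h_nonzero:
  assumes "\<forall>i\<in>N. hlin h J u i \<noteq> 0"
  shows "hmono (red_h h) R' J u j \<noteq> 0"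
proof -
  have "hlin (red_h h) J u C \<noteq> 0" if C: "C \<in> R'" for C
  proof -
    have "C \<in> Q" using C red_rows_subset by blast
    then have "class_rep C \<in> N" using class_rep_in class_subset by blast
    with assms show ?thesis
      using hlin_red_h_nonzero[OF C class_rep_in[OF \<open>C \<in> Q\<close>]] by blast
  qed
  then show ?thesis
    unfolding hmono_def using finite_red_rows by (simp add: prod_zero_iff)
qed

lemma red_lam_eq:
  assumes one: "\<forall>i\<in>N. hlin h J (\<lambda>_. 1) i \<noteq> 0"
  shows "red_lam h R J lam = (\<lambda>j. if j \<in> J then lam j * red_factor j else 0)"
  unfolding red_lam_def
proof (rule the_equality)
  fix lam' assume lam': "(\<forall>j. j \<notin> J \<longrightarrow> lam' j = 0) \<and>
    (\<forall>u. hdefined h R J u \<and> hdefined (red_h h) R' J u \<longrightarrow>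
         hmap (red_h h) R' J lam' u = hmap h R J lam u)"
  let ?one = "\<lambda>_::'c. 1::real"
  have "hdefined h R J ?one" using hdefined_if_nz_rows_nonzero[OF one] .
  then have eq: "hmap (red_h h) R' J lam' ?one
      = hmap (red_h h) R' J (\<lambda>j. if j \<in> J then lam j * red_factor j else 0) ?one"
    using lam' hdefined_red_h hmap_red_factor by auto
  show "lam' = (\<lambda>j. if j \<in> J then lam j * red_factor j else 0)"
  proof
    fix j
    show "lam' j = (if j \<in> J then lam j * red_factor j else 0)"
    proof (cases "j \<in> J")
      case True
      then have "lam' j * hmono (red_h h) R' J ?one j
          = (lam j * red_factor j) * hmono (red_h h) R' J ?one j"
        using fun_cong[OF eq, of j] by (simp add: hmap_def)
      with True show ?thesis using hmono_red_h_nonzero[OF one] by simp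
    qed (use lam' in auto)
  qed
qed (auto simp: hmap_red_factor)

lemma hmap_red_lam:
  assumes one: "\<forall>i\<in>N. hlin h J (\<lambda>_. 1) i \<noteq> 0" and defined: "hdefined h R J u"
  shows "hmap (red_h h) R' J (red_lam h R J lam) u = hmap h R J lam u"
  unfolding red_lam_eq[OF one] by (rule hmap_red_factor[OF defined])

lemma sum_red_h_eq_0:
  assumes "j \<in> J" and "(\<Sum>i\<in>R. h i j) = 0"
  shows "(\<Sum>C\<in>R'. red_h h C j) = 0"
proof -
  have "(\<Sum>C\<in>R'. red_h h C j) = (\<Sum>C\<in>Q. \<Sum>i\<in>C. h i j)"
    unfolding red_h_def using assms(1)
    by (intro sum.mono_neutral_left[OF finite_classes red_rows_subset])
      (auto simp: red_rows_def zero_row_def red_h_def)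
  also have "\<dots> = (\<Sum>i\<in>N. h i j)"
    by (rule sum_classes)
  also have "\<dots> = (\<Sum>i\<in>R. h i j)"
    using assms(1) by (intro sum.mono_neutral_left[OF finite_R nz_rows_subset])
      (auto simp: nz_rows_def zero_row_def)
  finally show ?thesis using assms(2) by simp
qed

(* The original pair is defined at u + t for all but finitely many t, where the identity holds;
   it passes to t = 0 by continuity of the reduced monomials. *)
lemma red_friendly_identity:
  assumes friendly: "friendly h R J lam"
    and one: "\<forall>i\<in>N. hlin h J (\<lambda>_. 1) i \<noteq> 0"
    and defined: "hdefined (red_h h) R' J u"
  shows "(\<Sum>j\<in>J. red_lam h R J lam j * hmono (red_h h) R' J u j) = 1"
proof -
  let ?g = "\<lambda>t. \<Sum>j\<in>J. red_lam h R J lam j * hmono (red_h h) R' J (\<lambda>k. u k + t) j"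
  define B where "B = (\<lambda>i. - hlin h J u i / hlin h J (\<lambda>_. 1) i) ` N"
  have "?g t = 1" if "t \<notin> B" for t
  proof -
    have "hlin h J (\<lambda>k. u k + t) i \<noteq> 0" if "i \<in> N" for i
    proof
      assume "hlin h J (\<lambda>k. u k + t) i = 0"
      then have "hlin h J u i + t * hlin h J (\<lambda>_. 1) i = 0"
        by (simp only: hlin_add_const)
      then have "t = - hlin h J u i / hlin h J (\<lambda>_. 1) i"
        using one \<open>i \<in> N\<close> by (simp add: field_simps)
      with \<open>t \<notin> B\<close> \<open>i \<in> N\<close> show False by (simp add: B_def)
    qed
    then have defined_t: "hdefined h R J (\<lambda>k. u k + t)"
      by (blast intro: hdefined_if_nz_rows_nonzero)
    have "?g t = (\<Sum>j\<in>J. hmap (red_h h) R' J (red_lam h R J lam) (\<lambda>k. u k + t) j)"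
      by (rule sum_hmap[symmetric])
    also have "\<dots> = (\<Sum>j\<in>J. hmap h R J lam (\<lambda>k. u k + t) j)"
      by (simp only: hmap_red_lam[OF one defined_t])
    also have "\<dots> = 1"
      using friendly defined_t by (simp add: sum_hmap friendly_def)
    finally show ?thesis .
  qed
  moreover have "eventually (\<lambda>t. t \<notin> B) (at 0)"
    using finite_nz_rows by (simp add: B_def eventually_not_in_finite)
  ultimately have "(?g \<longlongrightarrow> 1) (at 0)"
    by (blast intro: tendsto_eventually eventually_mono)
  moreover have "(?g \<longlongrightarrow> (\<Sum>j\<in>J. red_lam h R J lam j * hmono (red_h h) R' J u j)) (at 0)"
    by (intro tendsto_sum tendsto_mult tendsto_const hmono_tendsto_add_const[OF defined])
  ultimately show ?thesis
    using tendsto_unique[OF at_neq_bot] by blast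
qed

(* Nonvanishing of the linear forms at the point 1 makes the reduced coefficient vector unique
   and allows moving points off the zero sets of the forms along the diagonal. *)
theorem horn_pair_red:
  assumes friendly: "friendly h R J lam"
    and one: "\<forall>i\<in>N. hlin h J (\<lambda>_. 1) i \<noteq> 0"
    and pos: "\<forall>u. (\<forall>j\<in>J. 0 < u j) \<longrightarrow> hdefined h R J u \<and> (\<forall>j\<in>J. 0 < hmap h R J lam u j)"
  shows "horn_pair (red_h h) R' J (red_lam h R J lam)"
proof -
  have pos_red: "hdefined (red_h h) R' J u \<and> (\<forall>j\<in>J. 0 < hmap (red_h h) R' J (red_lam h R J lam) u j)"
    if "\<forall>j\<in>J. 0 < u j" for u
    using pos that hdefined_red_h hmap_red_lam[OF one] by auto
  have "red_lam h R J lam j \<noteq> 0" if "j \<in> J" for j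
    using pos_red[of "\<lambda>_. 1"] that by (force simp: hmap_def)
  then have "friendly (red_h h) R' J (red_lam h R J lam)"
    using friendly finite_red_rows red_friendly_identity[OF friendly one] sum_red_h_eq_0
    by (auto simp: friendly_def)
  then show ?thesis
    unfolding horn_pair_def using pos_red red_rows_not_multiple by (auto simp: red_rows_def)
qed

end

section \<open>Gibbs' inequality\<close>

lemma gibbs_inequality_strict:
  fixes a s :: "'a \<Rightarrow> real"
  assumes "finite A" and a: "\<forall>l\<in>A. 0 < a l" and s: "\<forall>l\<in>A. 0 < s l"
    and s_sum: "(\<Sum>l\<in>A. s l) = 1" and "\<exists>l\<in>A. s l \<noteq> a l / (\<Sum>l\<in>A. a l)"
  shows "(\<Sum>l\<in>A. a l * ln (s l)) < (\<Sum>l\<in>A. a l * ln (a l / (\<Sum>l\<in>A. a l)))"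
proof -
  define S where "S = (\<Sum>l\<in>A. a l)"
  define t where "t l = a l / S" for l
  obtain l0 where l0: "l0 \<in> A" "s l0 \<noteq> t l0"
    using assms(5) by (auto simp: t_def S_def)
  have "0 < S"
    unfolding S_def using assms(1) a l0(1) by (auto intro: sum_pos)
  then have t: "0 < t l" if "l \<in> A" for l
    using a that by (simp add: t_def)
  have linear: "a l * ((s l - t l) / t l) = S * s l - a l" if "l \<in> A" for l
  proof -
    have "a l \<noteq> 0" using a that by force
    with \<open>0 < S\<close> show ?thesis by (simp add: t_def field_simps)
  qed
  have le: "a l * (ln (s l) - ln (t l)) \<le> S * s l - a l" if "l \<in> A" for l
    using ln_diff_le[of "s l" "t l"] s t a that linear[OF that]
    by (metis mult_left_mono less_imp_le)
  have "a l0 * (ln (s l0) - ln (t l0)) < S * s l0 - a l0"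
    using ln_diff_less[of "s l0" "t l0"] s t a l0 linear[OF l0(1)]
    by (metis mult_strict_left_mono)
  then have "(\<Sum>l\<in>A. a l * (ln (s l) - ln (t l))) < (\<Sum>l\<in>A. S * s l - a l)"
    using assms(1) le l0(1) by (intro sum_strict_mono_ex1) auto
  also have "\<dots> = 0"
    by (simp add: sum_subtractf sum_distrib_left[symmetric] s_sum S_def)
  finally show ?thesis
    by (simp add: sum_subtractf right_diff_distrib t_def S_def)
qed

lemma gibbs_inequality:
  fixes a s :: "'a \<Rightarrow> real"
  assumes "finite A" and "\<forall>l\<in>A. 0 < a l" and "\<forall>l\<in>A. 0 < s l" and "(\<Sum>l\<in>A. s l) = 1"
  shows "(\<Sum>l\<in>A. a l * ln (s l)) \<le> (\<Sum>l\<in>A. a l * ln (a l / (\<Sum>l\<in>A. a l)))"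
proof (cases "\<exists>l\<in>A. s l \<noteq> a l / (\<Sum>l\<in>A. a l)")
  case True
  with assms show ?thesis by (intro less_imp_le gibbs_inequality_strict)
qed (auto intro: sum.cong eq_refl)

section \<open>Paths of labelled trees\<close>

lemma prod_list_map_eq_prod_count:
  fixes s :: "'a \<Rightarrow> 'b::comm_monoid_mult"
  assumes "set p \<subseteq> L" and "finite L"
  shows "prod_list (map s p) = (\<Prod>i\<in>L. s i ^ count_list p i)"
  using assms(1)
proof (induction p)
  case (Cons a p)
  then have "a \<in> L" by simp
  have "(\<Prod>i\<in>L. s i ^ count_list (a # p) i) = (\<Prod>i\<in>L. (if i = a then s i else 1) * s i ^ count_list p i)"
    by (rule prod.cong) auto
  also have "\<dots> = s a * (\<Prod>i\<in>L. s i ^ count_list p i)"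
    using \<open>a \<in> L\<close> assms(2) by (simp add: prod.distrib prod.If_cases Int_absorb1)
  finally show ?case using Cons by simp
qed simp

lemma ltree_induct [case_names Node]:
  assumes "\<And>cs. (\<And>l t. (l, t) \<in> set cs \<Longrightarrow> P t) \<Longrightarrow> P (Node cs)"
  shows "P t"
proof (induction t rule: ltree.induct)
  case (Node cs)
  show ?case
  proof (rule assms)
    fix l t assume "(l, t) \<in> set cs"
    moreover have "t \<in> Basic_BNFs.snds (l, t)" by simp
    ultimately show "P t" using Node by blast
  qed
qed

lemma paths_Node:
  "paths (Node cs) = (if cs = [] then {[]} else (\<Union>(l, t)\<in>set cs. (#) l ` paths t))"
proof (cases "cs = []")
  case True
  then show ?thesis
    by (auto simp: paths_def elim: is_path.cases intro: is_path.intros)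
next
  case False
  have "is_path (Node cs) p \<longleftrightarrow> (\<exists>(l, t)\<in>set cs. \<exists>q. p = l # q \<and> is_path t q)" for p
  proof
    assume "is_path (Node cs) p"
    then show "\<exists>(l, t)\<in>set cs. \<exists>q. p = l # q \<and> is_path t q"
      using False by (cases rule: is_path.cases) auto
  qed (auto intro: is_path.step)
  with False show ?thesis by (auto simp: paths_def)
qed

lemma finite_paths: "finite (paths t)"
  by (induction t rule: ltree_induct) (auto simp: paths_Node)

lemma paths_nonempty: "paths t \<noteq> {}"
proof (induction t rule: ltree_induct)
  case (Node cs)
  show ?case
  proof (cases cs)
    case (Cons c cs')
    obtain l t where "c = (l, t)" by force
    with Node Cons have "paths t \<noteq> {}" by auto
    with Cons \<open>c = (l, t)\<close> show ?thesis unfolding paths_Node by force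
  qed (simp add: paths_Node)
qed

lemma finite_vertices: "finite {v. vertex t v}"
proof (induction t rule: ltree_induct)
  case (Node cs)
  have "{v. vertex (Node cs) v} = insert (Node cs) (\<Union>(l, t)\<in>set cs. {v. vertex t v})"
    by (auto elim: vertex.cases intro: vertex.intros)
  with Node show ?case by auto
qed

lemma finite_florets: "finite (florets T)"
proof -
  have "florets T \<subseteq> (\<lambda>v. case v of Node cs \<Rightarrow> set (map fst cs)) ` {v. vertex T v}"
    unfolding florets_def by (force intro: image_eqI[where x = "Node _"])
  then show ?thesis using finite_vertices finite_subset by blast
qed

lemma finite_floret: "f \<in> florets T \<Longrightarrow> finite f"
  unfolding florets_def by auto

lemma finite_labels: "finite (labels T)"
  unfolding labels_def using finite_florets finite_floret by blast

lemma labels_child: "(l, t) \<in> set cs \<Longrightarrow> labels t \<subseteq> labels (Node cs)"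
  unfolding labels_def florets_def by (blast intro: vertex.child)

lemma path_labels: "is_path t p \<Longrightarrow> set p \<subseteq> labels t"
proof (induction rule: is_path.induct)
  case (step l t cs p)
  have "set (map fst cs) \<in> florets (Node cs)"
    unfolding florets_def using step(1) by (auto intro: vertex.root)
  moreover have "l \<in> set (map fst cs)"
    using step(1) by (metis fst_conv image_eqI set_map)
  ultimately have "l \<in> labels (Node cs)"
    unfolding labels_def by blast
  with step labels_child[OF step(1)] show ?case by auto
qed simp

lemma vertex_path_prefix: "vertex t v \<Longrightarrow> \<exists>q. \<forall>p. is_path v p \<longrightarrow> is_path t (q @ p)"
proof (induction rule: vertex.induct)
  case (root t)
  show ?case by (rule exI[of _ "[]"]) simp
next
  case (child l t' cs v)
  then obtain q where "\<forall>p. is_path v p \<longrightarrow> is_path t' (q @ p)" by blast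
  with child(1) show ?case
    by (intro exI[of _ "l # q"]) (auto intro: is_path.step)
qed

lemma label_on_path:
  assumes "i \<in> labels T"
  shows "\<exists>p\<in>paths T. i \<in> set p"
proof -
  obtain cs t' where v: "vertex T (Node cs)" and it: "(i, t') \<in> set cs"
    using assms unfolding labels_def florets_def by auto
  obtain p' where "p' \<in> paths t'" using paths_nonempty by blast
  with it have "is_path (Node cs) (i # p')"
    by (auto simp: paths_def intro: is_path.step)
  moreover obtain q where "\<forall>p. is_path (Node cs) p \<longrightarrow> is_path T (q @ p)"
    using vertex_path_prefix[OF v] by blast
  ultimately have "q @ i # p' \<in> paths T" by (auto simp: paths_def)
  then show ?thesis by force
qed

lemma sum_paths_prod_list:
  fixes s :: "'l \<Rightarrow> real"
  assumes "\<forall>cs. vertex t (Node cs) \<longrightarrow> cs \<noteq> [] \<longrightarrow>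
      distinct (map fst cs) \<and> (\<Sum>l\<in>set (map fst cs). s l) = 1"
  shows "(\<Sum>p\<in>paths t. prod_list (map s p)) = 1"
  using assms
proof (induction t rule: ltree_induct)
  case (Node cs)
  show ?case
  proof (cases "cs = []")
    case False
    have distinct: "distinct (map fst cs)" and sum_one: "(\<Sum>l\<in>set (map fst cs). s l) = 1"
      using Node.prems False by (auto intro: vertex.root)
    have child: "(\<Sum>p\<in>paths t. prod_list (map s p)) = 1" if "(l, t) \<in> set cs" for l t
      using Node.IH[OF that] Node.prems that by (auto intro: vertex.child)
    have inj: "inj_on fst (set cs)"
      using distinct by (simp add: distinct_map)
    have disjoint: "(\<lambda>(l, t). (#) l ` paths t) x \<inter> (\<lambda>(l, t). (#) l ` paths t) y = {}"
      if "x \<in> set cs" "y \<in> set cs" "x \<noteq> y" for x y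
    proof -
      from that inj have "fst x \<noteq> fst y" by (auto simp: inj_on_def)
      then show ?thesis by (cases x; cases y) auto
    qed
    have "(\<Sum>p\<in>paths (Node cs). prod_list (map s p))
        = (\<Sum>x\<in>set cs. \<Sum>p\<in>(\<lambda>(l, t). (#) l ` paths t) x. prod_list (map s p))"
      unfolding paths_Node if_not_P[OF False]
      by (rule sum.UNION_disjoint) (auto simp: finite_paths disjoint)
    also have "\<dots> = (\<Sum>x\<in>set cs. s (fst x))"
    proof (rule sum.cong[OF refl])
      fix x assume x: "x \<in> set cs"
      obtain l t where lt: "x = (l, t)" by force
      have "(\<Sum>p\<in>(#) l ` paths t. prod_list (map s p)) = s l * (\<Sum>p\<in>paths t. prod_list (map s p))"
        by (simp add: sum.reindex sum_distrib_left)
      with child x lt show "(\<Sum>p\<in>(\<lambda>(l, t). (#) l ` paths t) x. prod_list (map s p)) = s (fst x)"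
        by simp
    qed
    also have "\<dots> = 1"
      using sum.reindex[OF inj, of s] sum_one by simp
    finally show ?thesis .
  qed (simp add: paths_Node)
qed

section \<open>Staged tree models\<close>

locale staged =
  fixes T :: "'l ltree"
  assumes staged: "staged_tree T"
begin

abbreviation "J \<equiv> paths T"
abbreviation "L \<equiv> labels T"
abbreviation "F \<equiv> florets T"

lemma floret_subset_labels: "f \<in> F \<Longrightarrow> f \<subseteq> L"
  unfolding labels_def by blast

lemma florets_disjoint: "f \<in> F \<Longrightarrow> g \<in> F \<Longrightarrow> f \<noteq> g \<Longrightarrow> f \<inter> g = {}"
  using staged unfolding staged_tree_def by blast

lemma two_le_card_floret:
  assumes "f \<in> F"
  shows "2 \<le> card f"
proof -
  obtain cs where cs: "f = set (map fst cs)" "vertex T (Node cs)" "cs \<noteq> []"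
    using assms by (auto simp: florets_def)
  then have "2 \<le> length cs" "distinct (map fst cs)"
    using staged unfolding staged_tree_def by auto
  with cs(1) show ?thesis using distinct_card[of "map fst cs"] by simp
qed

lemma floret_nonempty: "f \<in> F \<Longrightarrow> f \<noteq> {}"
  unfolding florets_def by auto

lemma sum_labels: "(\<Sum>i\<in>L. g i) = (\<Sum>f\<in>F. \<Sum>l\<in>f. g l)"
  unfolding labels_def
  using sum.Union_disjoint[of F g] finite_floret florets_disjoint by auto

lemma prod_labels: "(\<Prod>i\<in>L. g i) = (\<Prod>f\<in>F. \<Prod>l\<in>f. g l)"
  unfolding labels_def
  using prod.Union_disjoint[of F g] finite_floret florets_disjoint by auto

definition floret_of :: "'l \<Rightarrow> 'l set" where
  "floret_of i = (THE f. f \<in> F \<and> i \<in> f)"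

lemma floret_of_eq: "f \<in> F \<Longrightarrow> i \<in> f \<Longrightarrow> floret_of i = f"
  unfolding floret_of_def using florets_disjoint by (intro the_equality) auto

lemma floret_of: "i \<in> L \<Longrightarrow> floret_of i \<in> F \<and> i \<in> floret_of i"
  unfolding labels_def using floret_of_eq by blast

definition label_count :: "('l list \<Rightarrow> real) \<Rightarrow> 'l \<Rightarrow> real" where
  "label_count u i = (\<Sum>j\<in>J. real (mu i j) * u j)"

definition floret_count :: "('l list \<Rightarrow> real) \<Rightarrow> 'l set \<Rightarrow> real" where
  "floret_count u f = (\<Sum>l\<in>f. label_count u l)"

definition mle_params :: "('l list \<Rightarrow> real) \<Rightarrow> 'l \<Rightarrow> real" where
  "mle_params u i = label_count u i / floret_count u (floret_of i)"

definition model_point :: "('l \<Rightarrow> real) \<Rightarrow> 'l list \<Rightarrow> real" where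
  "model_point s = (\<lambda>j. if j \<in> J then \<Prod>i\<in>L. s i ^ mu i j else 0)"

lemma staged_model_eq:
  "staged_model T = {model_point s | s. (\<forall>i\<in>L. 0 < s i \<and> s i < 1) \<and> (\<forall>f\<in>F. (\<Sum>i\<in>f. s i) = 1)}"
  unfolding staged_model_def model_point_def by blast

lemma hlin_stH_Inl: "hlin (stH T) J u (Inl i) = label_count u i"
  by (simp add: hlin_def stH_def label_count_def)

lemma hlin_stH_Inr: "hlin (stH T) J u (Inr f) = - floret_count u f"
  unfolding hlin_def stH_def floret_count_def label_count_def
  by (simp add: sum_distrib_right sum_negf sum.swap[of _ J])

lemma mu_pos: "i \<in> set p \<Longrightarrow> 0 < mu i p"
  by (metis count_list_0_iff gr0I mu_def)

lemma label_count_pos: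
  assumes u: "\<forall>j\<in>J. 0 < u j" and "i \<in> L"
  shows "0 < label_count u i"
proof -
  obtain p where p: "p \<in> J" "i \<in> set p"
    using label_on_path[OF \<open>i \<in> L\<close>] by blast
  then have "0 < real (mu i p) * u p"
    using u mu_pos[OF p(2)] by simp
  also have "\<dots> \<le> label_count u i"
    unfolding label_count_def using u finite_paths p(1)
    by (intro member_le_sum) auto
  finally show ?thesis .
qed

lemma label_count_less_floret_count:
  assumes u: "\<forall>j\<in>J. 0 < u j" and f: "f \<in> F" and "i \<in> f"
  shows "label_count u i < floret_count u f"
proof -
  have "card (f - {i}) \<noteq> 0"
    using two_le_card_floret[OF f] \<open>i \<in> f\<close> by simp
  then obtain l where l: "l \<in> f - {i}" by (metis card.empty ex_in_conv)
  have pos: "\<forall>k\<in>f. 0 < label_count u k"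
    using label_count_pos[OF u] floret_subset_labels[OF f] by blast
  have "floret_count u f = label_count u i + (\<Sum>k\<in>f - {i}. label_count u k)"
    unfolding floret_count_def using finite_floret[OF f] \<open>i \<in> f\<close> by (simp add: sum.remove)
  moreover have "label_count u l \<le> (\<Sum>k\<in>f - {i}. label_count u k)"
    using l pos finite_floret[OF f] by (intro member_le_sum) auto
  moreover have "0 < label_count u l"
    using l pos by blast
  ultimately show ?thesis by linarith
qed

lemma floret_count_pos:
  assumes u: "\<forall>j\<in>J. 0 < u j" and f: "f \<in> F"
  shows "0 < floret_count u f"
proof -
  obtain i where "i \<in> f"
    using floret_nonempty[OF f] by blast
  then show ?thesis
    using label_count_less_floret_count[OF u f] label_count_pos[OF u] floret_subset_labels[OF f]
    by fastforce
qed

lemma sum_stR: "(\<Sum>r\<in>stR T. g r) = (\<Sum>i\<in>L. g (Inl i)) + (\<Sum>f\<in>F. g (Inr f))"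
proof -
  have "Inl ` L \<inter> Inr ` F = {}" by auto
  then show ?thesis
    unfolding stR_def
    by (simp add: sum.union_disjoint[OF finite_imageI[OF finite_labels] finite_imageI[OF finite_florets]]
        sum.reindex)
qed

lemma prod_stR: "(\<Prod>r\<in>stR T. g r) = (\<Prod>i\<in>L. g (Inl i)) * (\<Prod>f\<in>F. g (Inr f))"
proof -
  have "Inl ` L \<inter> Inr ` F = {}" by auto
  then show ?thesis
    unfolding stR_def
    by (simp add: prod.union_disjoint[OF finite_imageI[OF finite_labels] finite_imageI[OF finite_florets]]
        prod.reindex)
qed

lemma finite_stR: "finite (stR T)"
  unfolding stR_def by (intro finite_UnI finite_imageI finite_labels finite_florets)

sublocale row_reduction "stH T" "stR T" J
  by unfold_locales (rule finite_stR)

lemma sum_stH_eq_0: "(\<Sum>r\<in>stR T. stH T r j) = 0"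
  by (simp add: sum_stR stH_def sum_negf sum_labels[of "\<lambda>i. int (mu i j)"])

lemma hlin_stH_nonzero:
  assumes u: "\<forall>j\<in>J. 0 < u j" and "r \<in> stR T"
  shows "hlin (stH T) J u r \<noteq> 0"
  using assms label_count_pos[OF u] floret_count_pos[OF u]
  by (force simp: stR_def hlin_stH_Inl hlin_stH_Inr)

lemma hlin_stH_one_nonzero: "\<forall>i\<in>N. hlin (stH T) J (\<lambda>_. 1) i \<noteq> 0"
  using hlin_stH_nonzero[of "\<lambda>_. 1"] by (simp add: nz_rows_def)

lemma stH_floret_neg:
  assumes f: "f \<in> F"
  shows "\<exists>j\<in>J. stH T (Inr f) j < 0"
proof -
  obtain l where "l \<in> f"
    using floret_nonempty[OF f] by blast
  then obtain p where p: "p \<in> J" "l \<in> set p"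
    using label_on_path floret_subset_labels[OF f] by (meson subsetD)
  then have "0 < int (mu l p)"
    using mu_pos[OF p(2)] by simp
  also have "\<dots> \<le> (\<Sum>l\<in>f. int (mu l p))"
    using \<open>l \<in> f\<close> finite_floret[OF f] by (intro member_le_sum) auto
  finally show ?thesis
    using p(1) by (auto simp: stH_def)
qed

lemma floret_count_nonzero_if_hdefined:
  assumes "hdefined (stH T) (stR T) J u" and "f \<in> F"
  shows "floret_count u f \<noteq> 0"
proof -
  obtain j where "j \<in> J" "stH T (Inr f) j < 0"
    using stH_floret_neg[OF \<open>f \<in> F\<close>] by blast
  moreover have "Inr f \<in> stR T"
    using \<open>f \<in> F\<close> by (simp add: stR_def)
  ultimately have "hlin (stH T) J u (Inr f) \<noteq> 0"
    using assms(1) by (auto simp: hdefined_def)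
  then show ?thesis by (simp add: hlin_stH_Inr)
qed

lemma stLam_mult_hmono:
  assumes nonzero: "\<forall>f\<in>F. floret_count u f \<noteq> 0"
  shows "stLam T j * hmono (stH T) (stR T) J u j = (\<Prod>i\<in>L. mle_params u i ^ mu i j)"
proof -
  define n where "n f = (\<Sum>l\<in>f. int (mu l j))" for f
  have floret: "(-1) powi (- n f) * (- floret_count u f) powi (- n f)
      = (\<Prod>l\<in>f. floret_count u (floret_of l) powi (- int (mu l j)))" if f: "f \<in> F" for f
  proof -
    have "(-1) powi (- n f) * (- floret_count u f) powi (- n f) = floret_count u f powi (- n f)"
      by (simp flip: power_int_mult_distrib)
    also have "\<dots> = (\<Prod>l\<in>f. floret_count u f powi (- int (mu l j)))"
      using nonzero f by (simp add: n_def power_int_sum flip: sum_negf)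
    also have "\<dots> = (\<Prod>l\<in>f. floret_count u (floret_of l) powi (- int (mu l j)))"
      using floret_of_eq[OF f] by simp
    finally show ?thesis .
  qed
  have sign: "stLam T j = (\<Prod>f\<in>F. (-1) powi (- n f))"
    unfolding stLam_def by (simp add: stH_def n_def power_int_sum flip: sum_negf)
  have "hmono (stH T) (stR T) J u j
      = (\<Prod>i\<in>L. label_count u i ^ mu i j) * (\<Prod>f\<in>F. (- floret_count u f) powi (- n f))"
    unfolding hmono_def prod_stR by (simp add: hlin_stH_Inl hlin_stH_Inr stH_def n_def)
  with sign have "stLam T j * hmono (stH T) (stR T) J u j
      = (\<Prod>i\<in>L. label_count u i ^ mu i j)
        * (\<Prod>f\<in>F. (-1) powi (- n f) * (- floret_count u f) powi (- n f))"
    by (simp add: prod.distrib mult_ac)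
  also have "\<dots> = (\<Prod>i\<in>L. label_count u i ^ mu i j)
        * (\<Prod>i\<in>L. floret_count u (floret_of i) powi (- int (mu i j)))"
    using floret by (simp add: prod_labels)
  also have "\<dots> = (\<Prod>i\<in>L. mle_params u i ^ mu i j)"
    by (simp add: mle_params_def power_int_minus power_divide divide_inverse power_mult_distrib
        power_inverse flip: prod.distrib)
  finally show ?thesis .
qed

lemma hmap_stH:
  assumes "\<forall>f\<in>F. floret_count u f \<noteq> 0"
  shows "hmap (stH T) (stR T) J (stLam T) u = model_point (mle_params u)"
  using stLam_mult_hmono[OF assms] by (simp add: hmap_def model_point_def fun_eq_iff)

lemma sum_mle_params:
  assumes "f \<in> F" and "floret_count u f \<noteq> 0"
  shows "(\<Sum>l\<in>f. mle_params u l) = 1"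
proof -
  have "(\<Sum>l\<in>f. mle_params u l) = (\<Sum>l\<in>f. label_count u l) / floret_count u f"
    by (simp add: mle_params_def floret_of_eq[OF assms(1)] sum_divide_distrib)
  with assms(2) show ?thesis by (simp add: floret_count_def)
qed

lemma mle_params_bounds:
  assumes u: "\<forall>j\<in>J. 0 < u j" and "i \<in> L"
  shows "0 < mle_params u i \<and> mle_params u i < 1"
proof -
  have "0 < label_count u i" and "label_count u i < floret_count u (floret_of i)"
    using label_count_pos[OF u \<open>i \<in> L\<close>] floret_of[OF \<open>i \<in> L\<close>]
      label_count_less_floret_count[OF u] by auto
  then show ?thesis by (simp add: mle_params_def)
qed

lemma sum_model_point:
  fixes s :: "'l \<Rightarrow> real"
  assumes "\<forall>f\<in>F. (\<Sum>l\<in>f. s l) = 1"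
  shows "(\<Sum>j\<in>J. model_point s j) = 1"
proof -
  have "model_point s p = prod_list (map s p)" if "p \<in> J" for p
  proof -
    from that have "is_path T p" by (simp add: paths_def)
    then have "prod_list (map s p) = (\<Prod>i\<in>L. s i ^ mu i p)"
      unfolding mu_def by (rule prod_list_map_eq_prod_count[OF path_labels finite_labels])
    with that show ?thesis by (simp add: model_point_def)
  qed
  then have "(\<Sum>j\<in>J. model_point s j) = (\<Sum>p\<in>J. prod_list (map s p))"
    by simp
  also have "\<dots> = 1"
  proof (rule sum_paths_prod_list, intro allI impI conjI)
    fix cs assume "vertex T (Node cs)" and "cs \<noteq> []"
    then show "distinct (map fst cs)"
      using staged unfolding staged_tree_def by blast
    from \<open>vertex T (Node cs)\<close> \<open>cs \<noteq> []\<close> have "set (map fst cs) \<in> F"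
      unfolding florets_def by blast
    with assms show "(\<Sum>l\<in>set (map fst cs). s l) = 1" by blast
  qed
  finally show ?thesis .
qed

lemma friendly_stH: "friendly (stH T) (stR T) J (stLam T)"
  unfolding friendly_def
proof (intro conjI ballI allI impI)
  show "finite (stR T)" by (rule finite_stR)
  show "finite J" by (rule finite_paths)
  show "(\<Sum>r\<in>stR T. stH T r j) = 0" for j
    by (rule sum_stH_eq_0)
  show "stLam T j \<noteq> 0" for j
    by (simp add: stLam_def)
  fix u assume "hdefined (stH T) (stR T) J u"
  then have nonzero: "\<forall>f\<in>F. floret_count u f \<noteq> 0"
    using floret_count_nonzero_if_hdefined by blast
  have "(\<Sum>j\<in>J. stLam T j * hmono (stH T) (stR T) J u j) = (\<Sum>j\<in>J. model_point (mle_params u) j)"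
    by (simp add: sum_hmap[symmetric] hmap_stH[OF nonzero])
  also have "\<dots> = 1"
    using nonzero sum_mle_params by (intro sum_model_point) blast
  finally show "(\<Sum>j\<in>J. stLam T j * hmono (stH T) (stR T) J u j) = 1" .
qed

lemma hmap_stH_pos:
  assumes u: "\<forall>j\<in>J. 0 < u j"
  shows "hdefined (stH T) (stR T) J u \<and> (\<forall>j\<in>J. 0 < hmap (stH T) (stR T) J (stLam T) u j)"
proof
  show "hdefined (stH T) (stR T) J u"
    unfolding hdefined_def using hlin_stH_nonzero[OF u] by blast
  have "\<forall>f\<in>F. floret_count u f \<noteq> 0"
    using floret_count_pos[OF u] by force
  then show "\<forall>j\<in>J. 0 < hmap (stH T) (stR T) J (stLam T) u j"
    using mle_params_bounds[OF u] by (simp add: hmap_stH model_point_def prod_pos)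
qed

lemma loglik_model_point:
  assumes s: "\<forall>i\<in>L. 0 < s i"
  shows "loglik J u (model_point s) = (\<Sum>i\<in>L. label_count u i * ln (s i))"
proof -
  have "ln (\<Prod>i\<in>L. s i ^ mu i j) = (\<Sum>i\<in>L. real (mu i j) * ln (s i))" for j
    using s by (subst ln_prod[OF finite_labels]) (auto simp: ln_realpow)
  then have "loglik J u (model_point s) = (\<Sum>j\<in>J. u j * (\<Sum>i\<in>L. real (mu i j) * ln (s i)))"
    by (simp add: loglik_def model_point_def)
  also have "\<dots> = (\<Sum>i\<in>L. label_count u i * ln (s i))"
    unfolding label_count_def
    by (simp add: sum_distrib_left sum_distrib_right sum.swap[of _ J] mult_ac)
  finally show ?thesis .
qed

lemma mle_params_floret:
  "f \<in> F \<Longrightarrow> l \<in> f \<Longrightarrow> mle_params u l = label_count u l / (\<Sum>k\<in>f. label_count u k)"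
  by (simp add: mle_params_def floret_of_eq floret_count_def)

lemma floret_loglik_le:
  assumes u: "\<forall>j\<in>J. 0 < u j" and f: "f \<in> F" and s: "\<forall>i\<in>L. 0 < s i" and "(\<Sum>i\<in>f. s i) = 1"
  shows "(\<Sum>l\<in>f. label_count u l * ln (s l)) \<le> (\<Sum>l\<in>f. label_count u l * ln (mle_params u l))"
proof -
  have "(\<Sum>l\<in>f. label_count u l * ln (s l))
      \<le> (\<Sum>l\<in>f. label_count u l * ln (label_count u l / (\<Sum>k\<in>f. label_count u k)))"
    using assms finite_floret[OF f] floret_subset_labels[OF f] label_count_pos[OF u]
    by (intro gibbs_inequality) auto
  then show ?thesis by (simp add: mle_params_floret[OF f])
qed

lemma floret_loglik_less:
  assumes u: "\<forall>j\<in>J. 0 < u j" and f: "f \<in> F" and s: "\<forall>i\<in>L. 0 < s i" and "(\<Sum>i\<in>f. s i) = 1"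
    and "\<exists>l\<in>f. s l \<noteq> mle_params u l"
  shows "(\<Sum>l\<in>f. label_count u l * ln (s l)) < (\<Sum>l\<in>f. label_count u l * ln (mle_params u l))"
proof -
  have "(\<Sum>l\<in>f. label_count u l * ln (s l))
      < (\<Sum>l\<in>f. label_count u l * ln (label_count u l / (\<Sum>k\<in>f. label_count u k)))"
    using assms finite_floret[OF f] floret_subset_labels[OF f] label_count_pos[OF u]
    by (intro gibbs_inequality_strict) (auto simp: mle_params_floret[OF f])
  then show ?thesis by (simp add: mle_params_floret[OF f])
qed

lemma is_MLE_mle_params:
  assumes u: "\<forall>j\<in>J. 0 < u j"
  shows "is_MLE J (staged_model T) u (model_point (mle_params u))"
  unfolding is_MLE_def
proof (intro conjI ballI impI)
  have "\<forall>f\<in>F. floret_count u f \<noteq> 0"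
    using floret_count_pos[OF u] by force
  then show "model_point (mle_params u) \<in> staged_model T"
    unfolding staged_model_eq using mle_params_bounds[OF u] sum_mle_params by blast
  fix q assume "q \<in> staged_model T" and "q \<noteq> model_point (mle_params u)"
  then obtain s where q: "q = model_point s" and s: "\<forall>i\<in>L. 0 < s i \<and> s i < 1"
    and s_sum: "\<forall>f\<in>F. (\<Sum>i\<in>f. s i) = 1"
    unfolding staged_model_eq by blast
  obtain i0 where "i0 \<in> L" "s i0 \<noteq> mle_params u i0"
    using \<open>q \<noteq> model_point (mle_params u)\<close> unfolding q model_point_def
    by (metis (no_types, lifting) prod.cong)
  then have "floret_of i0 \<in> F" "\<exists>l\<in>floret_of i0. s l \<noteq> mle_params u l"
    using floret_of by blast+
  have "loglik J u q = (\<Sum>f\<in>F. \<Sum>l\<in>f. label_count u l * ln (s l))"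
    using s by (simp add: q loglik_model_point sum_labels)
  also have "\<dots> < (\<Sum>f\<in>F. \<Sum>l\<in>f. label_count u l * ln (mle_params u l))"
    using s s_sum floret_loglik_le[OF u] floret_loglik_less[OF u] \<open>floret_of i0 \<in> F\<close>
      \<open>\<exists>l\<in>floret_of i0. s l \<noteq> mle_params u l\<close>
    by (intro sum_strict_mono_ex1[OF finite_florets]) blast+
  also have "\<dots> = loglik J u (model_point (mle_params u))"
    using mle_params_bounds[OF u] by (simp add: loglik_model_point sum_labels)
  finally show "loglik J u q < loglik J u (model_point (mle_params u))" .
qed

lemma staged_model_pos_sum:
  assumes "p \<in> staged_model T"
  shows "(\<forall>j\<in>J. 0 < p j) \<and> (\<Sum>j\<in>J. p j) = 1"
proof -
  obtain s where p: "p = model_point s" and s: "\<forall>i\<in>L. 0 < s i \<and> s i < 1"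
    and s_sum: "\<forall>f\<in>F. (\<Sum>i\<in>f. s i) = 1"
    using assms unfolding staged_model_eq by blast
  then show ?thesis
    using sum_model_point[OF s_sum] by (simp add: model_point_def prod_pos)
qed

lemma model_point_mle_params_eq:
  assumes p: "p \<in> staged_model T"
  shows "model_point (mle_params p) = p"
proof (rule ccontr)
  let ?q = "model_point (mle_params p)"
  assume "?q \<noteq> p"
  have p_pos: "\<forall>j\<in>J. 0 < p j" and p_sum: "(\<Sum>j\<in>J. p j) = 1"
    using staged_model_pos_sum[OF p] by auto
  have "?q \<in> staged_model T" and "loglik J p p < loglik J p ?q"
    using is_MLE_mle_params[OF p_pos] p \<open>?q \<noteq> p\<close> unfolding is_MLE_def by auto
  moreover have "loglik J p ?q \<le> loglik J p p"
    using gibbs_inequality[OF finite_paths p_pos, of ?q] staged_model_pos_sum[OF \<open>?q \<in> staged_model T\<close>]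
    by (simp add: loglik_def p_sum)
  ultimately show False by simp
qed

lemma image_model_point_mle_params:
  "(\<lambda>u. model_point (mle_params u)) ` {u. \<forall>j\<in>J. 0 < u j} = staged_model T"
proof
  show "(\<lambda>u. model_point (mle_params u)) ` {u. \<forall>j\<in>J. 0 < u j} \<subseteq> staged_model T"
    using is_MLE_mle_params by (auto simp: is_MLE_def)
  show "staged_model T \<subseteq> (\<lambda>u. model_point (mle_params u)) ` {u. \<forall>j\<in>J. 0 < u j}"
    using model_point_mle_params_eq staged_model_pos_sum by (auto intro: image_eqI[OF sym])
qed

lemma horn_pair_red_stH: "horn_pair (red_h (stH T)) R' J (red_lam (stH T) (stR T) J (stLam T))"
  using friendly_stH hlin_stH_one_nonzero hmap_stH_pos by (intro horn_pair_red) auto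

lemma hmap_red_stH:
  assumes u: "\<forall>j\<in>J. 0 < u j"
  shows "hmap (red_h (stH T)) R' J (red_lam (stH T) (stR T) J (stLam T)) u = model_point (mle_params u)"
proof -
  have "\<forall>f\<in>F. floret_count u f \<noteq> 0"
    using floret_count_pos[OF u] by force
  then show ?thesis
    using hmap_red_lam[OF hlin_stH_one_nonzero] hmap_stH_pos[OF u] hmap_stH by simp
qed

end

theorem corollary3p6:
  fixes T :: "'l ltree"
  assumes "staged_tree T"
  defines "J \<equiv> paths T"
  defines "Ht \<equiv> red_h (stH T)"
  defines "Rt \<equiv> red_rows (stH T) (stR T) J"
  defines "lt \<equiv> red_lam (stH T) (stR T) J (stLam T)"
  shows "horn_pair Ht Rt J lt
       \<and> (\<forall>u. (\<forall>j\<in>J. 0 < u j) \<longrightarrow> is_MLE J (staged_model T) u (hmap Ht Rt J lt u))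
       \<and> hmap Ht Rt J lt ` {u. \<forall>j\<in>J. 0 < u j} = staged_model T"
proof -
  interpret S: staged T
    using assms(1) by (rule staged.intro)
  have "hmap Ht Rt J lt ` {u. \<forall>j\<in>J. 0 < u j}
      = (\<lambda>u. S.model_point (S.mle_params u)) ` {u. \<forall>j\<in>J. 0 < u j}"
    unfolding Ht_def Rt_def lt_def J_def by (intro image_cong) (simp_all add: S.hmap_red_stH)
  then show ?thesis
    unfolding Ht_def Rt_def lt_def J_def
    using S.horn_pair_red_stH S.is_MLE_mle_params S.hmap_red_stH S.image_model_point_mle_params
    by simp
qed

end
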